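(* Let $\mathbb{M}$ and $\mathbb{M}'$ be partial groups and let $F\colon\mathbb{M}\times\Delta[m]\to\mathbb{M}'$ be a simplicial map. Then $F$ is completely determined by: (i) the maps $f_i=F|_{\mathbb{M}\times\{\bullet_i\}}\colon\mathbb{M}\to\mathbb{M}'$ for $i=0,\dots,m$; and (ii) the elements $[\eta_k]=F(v_{\mathbb{M}},\iota_k)\in\mathbb{M}'_1$ for $k=1,\dots,m$.
   Context: Partial groups are regarded as simplicial sets: the $n$-simplices of $\mathbb{M}$ are the words $[x_1|\dots|x_n]$ in the domain of the partial product, with $d_0$ deleting $x_1$, $d_n$ deleting $x_n$, $d_i$ ($0<i<n$) replacing $x_i,x_{i+1}$ by $x_ix_{i+1}$, and $s_i$ inserting $1$ in position $i+1$; $v_{\mathbb{M}}$ denotes the unique vertex of $\mathbb{M}$. $\Delta[m]$ is the nerve of the poset $\bullet_0\to\bullet_1\to\dots\to\bullet_m$; $\bullet_0,\dots,\bullet_m$ are its vertices and $\iota_k\colon\bullet_{k-1}\to\bullet_k$ ($k=1,\dots,m$) its non-degenerate edges between consecutive vertices. *)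

theory Defs
  imports Main
begin

text \<open>A partial group is given by a set M, a domain D of words (lists) over M,
a product Pi defined on D, and an inversion iv on M. The identity is Pi [].\<close>

definition partial_group ::
  "'a set \<Rightarrow> 'a list set \<Rightarrow> ('a list \<Rightarrow> 'a) \<Rightarrow> ('a \<Rightarrow> 'a) \<Rightarrow> bool" where
  "partial_group M D Pi iv \<longleftrightarrow>
     D \<subseteq> lists M \<and>
     [] \<in> D \<and>
     (\<forall>x\<in>M. [x] \<in> D) \<and>
     (\<forall>u v. u @ v \<in> D \<longrightarrow> u \<in> D \<and> v \<in> D) \<and>
     (\<forall>w\<in>D. Pi w \<in> M) \<and>
     (\<forall>x\<in>M. Pi [x] = x) \<and>
     (\<forall>u v w. u @ v @ w \<in> D \<longrightarrow>
        u @ [Pi v] @ w \<in> D \<and> Pi (u @ v @ w) = Pi (u @ [Pi v] @ w)) \<and>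
     (\<forall>x\<in>M. iv x \<in> M \<and> iv (iv x) = x) \<and>
     (\<forall>w\<in>D. rev (map iv w) @ w \<in> D \<and> Pi (rev (map iv w) @ w) = Pi [])"

text \<open>n-simplices of M: words of length n in D.\<close>

definition pg_face :: "('a list \<Rightarrow> 'a) \<Rightarrow> nat \<Rightarrow> 'a list \<Rightarrow> 'a list" where
  "pg_face Pi i w =
     (if i = 0 then tl w
      else if i = length w then butlast w
      else take (i - 1) w @ [Pi [w ! (i - 1), w ! i]] @ drop (Suc i) w)"

definition pg_degen :: "('a list \<Rightarrow> 'a) \<Rightarrow> nat \<Rightarrow> 'a list \<Rightarrow> 'a list" where
  "pg_degen Pi i w = take i w @ [Pi []] @ drop i w"

definition delta_simplices :: "nat \<Rightarrow> nat \<Rightarrow> nat list set" where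
  "delta_simplices m n = {a. length a = Suc n \<and> sorted a \<and> set a \<subseteq> {..m}}"

definition delta_face :: "nat \<Rightarrow> nat list \<Rightarrow> nat list" where
  "delta_face i a = take i a @ drop (Suc i) a"

definition delta_degen :: "nat \<Rightarrow> nat list \<Rightarrow> nat list" where
  "delta_degen i a = take (Suc i) a @ drop i a"

definition pg_prod_simplex ::
  "'a list set \<Rightarrow> nat \<Rightarrow> ('a list \<times> nat list) \<Rightarrow> bool" where
  "pg_prod_simplex D m x \<longleftrightarrow> fst x \<in> D \<and> snd x \<in> delta_simplices m (length (fst x))"

definition simplicial_map_prod ::
  "'a list set \<Rightarrow> ('a list \<Rightarrow> 'a) \<Rightarrow> nat \<Rightarrow> 'b list set \<Rightarrow> ('b list \<Rightarrow> 'b)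
     \<Rightarrow> ('a list \<times> nat list \<Rightarrow> 'b list) \<Rightarrow> bool" where
  "simplicial_map_prod D Pi m D' Pi' F \<longleftrightarrow>
     (\<forall>w a. pg_prod_simplex D m (w, a) \<longrightarrow>
        F (w, a) \<in> D' \<and> length (F (w, a)) = length w \<and>
        (0 < length w \<longrightarrow> (\<forall>i\<le>length w.
            F (pg_face Pi i w, delta_face i a) = pg_face Pi' i (F (w, a)))) \<and>
        (\<forall>i\<le>length w.
            F (pg_degen Pi i w, delta_degen i a) = pg_degen Pi' i (F (w, a))))"

end

theory Submission
  imports Defs
begin

text \<open>Words of M' are determined by their two outer faces, so a simplicial map out of
  M \<times> \<Delta>[m] is determined by its values on edges (an induction on dimension). An edge
  (1, b \<rightarrow> c) labelled by the identity is the inner face of the 2-simplex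
  ([1,1], [b, c-1, c]), hence a composite of the edges \<iota>k; an arbitrary edge
  (x, b \<rightarrow> c) is the inner face of ([x,1], [b, b, c]), whose outer faces are the
  degenerate edge (x, b \<rightarrow> b) and the identity edge (1, b \<rightarrow> c).\<close>

lemma partial_groupD:
  assumes "partial_group M D Pi iv"
  shows "D \<subseteq> lists M" and "[] \<in> D" and "\<And>x. x \<in> M \<Longrightarrow> [x] \<in> D"
    and "\<And>u v. u @ v \<in> D \<Longrightarrow> u \<in> D" and "\<And>u v. u @ v \<in> D \<Longrightarrow> v \<in> D"
    and "\<And>w. w \<in> D \<Longrightarrow> Pi w \<in> M" and "\<And>x. x \<in> M \<Longrightarrow> Pi [x] = x"
    and "\<And>u v w. u @ v @ w \<in> D \<Longrightarrow> u @ [Pi v] @ w \<in> D"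
    and "\<And>u v w. u @ v @ w \<in> D \<Longrightarrow> Pi (u @ v @ w) = Pi (u @ [Pi v] @ w)"
  using assms unfolding partial_group_def by blast+

lemma partial_group_unit_D:
  assumes "partial_group M D Pi iv"
  shows "[Pi []] \<in> D"
  using partial_groupD(2,3,6)[OF assms] by blast

lemma partial_group_right_unit:
  assumes pg: "partial_group M D Pi iv" and x: "[x] \<in> D"
  shows "[x, Pi []] \<in> D" and "Pi [x, Pi []] = x"
proof -
  have "x \<in> M" using partial_groupD(1)[OF pg] x by auto
  then show "[x, Pi []] \<in> D" "Pi [x, Pi []] = x"
    using partial_groupD(7)[OF pg] partial_groupD(8,9)[OF pg, of "[x]" "[]" "[]"] x by simp_all
qed

lemma pg_prod_simplex_tl:
  assumes pg: "partial_group M D Pi iv" and s: "pg_prod_simplex D m (w, a)" and "w \<noteq> []"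
  shows "pg_prod_simplex D m (tl w, tl a)"
proof -
  have "tl w \<in> D"
    using s partial_groupD(5)[OF pg, of "take 1 w" "tl w"]
    by (cases w) (auto simp: pg_prod_simplex_def)
  moreover have "set (tl a) \<subseteq> set a" by (cases a) auto
  ultimately show ?thesis
    using assms by (auto simp: pg_prod_simplex_def delta_simplices_def sorted_tl)
qed

lemma pg_prod_simplex_butlast:
  assumes pg: "partial_group M D Pi iv" and s: "pg_prod_simplex D m (w, a)" and "w \<noteq> []"
  shows "pg_prod_simplex D m (butlast w, butlast a)"
proof -
  have "butlast w \<in> D"
    using s \<open>w \<noteq> []\<close> partial_groupD(4)[OF pg, of "butlast w" "[last w]"]
    by (simp add: pg_prod_simplex_def)
  moreover have "set (butlast a) \<subseteq> set a" by (auto dest: in_set_butlastD)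
  ultimately show ?thesis
    using assms by (auto simp: pg_prod_simplex_def delta_simplices_def sorted_butlast)
qed

lemma list_eq_by_tl_butlast:
  assumes "length u = length v" "2 \<le> length u" "tl u = tl v" "butlast u = butlast v"
  shows "u = v"
proof -
  obtain x xs y ys where "u = x # xs" "v = y # ys"
    using assms(1,2) by (cases u; cases v) auto
  then show ?thesis using assms by (auto split: if_splits)
qed

lemma simplicial_map_prod_length:
  assumes "simplicial_map_prod D Pi m D' Pi' F" "pg_prod_simplex D m (w, a)"
  shows "length (F (w, a)) = length w"
  using assms unfolding simplicial_map_prod_def by blast

lemma simplicial_map_prod_tl:
  assumes "simplicial_map_prod D Pi m D' Pi' F" and "pg_prod_simplex D m (w, a)"
    and "w \<noteq> []"
  shows "F (tl w, tl a) = tl (F (w, a))"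
proof -
  have "F (pg_face Pi 0 w, delta_face 0 a) = pg_face Pi' 0 (F (w, a))"
    using assms unfolding simplicial_map_prod_def by blast
  then show ?thesis by (simp add: pg_face_def delta_face_def drop_Suc)
qed

lemma simplicial_map_prod_butlast:
  assumes F: "simplicial_map_prod D Pi m D' Pi' F" and s: "pg_prod_simplex D m (w, a)"
    and "w \<noteq> []"
  shows "F (butlast w, butlast a) = butlast (F (w, a))"
proof -
  have "F (pg_face Pi (length w) w, delta_face (length w) a) = pg_face Pi' (length w) (F (w, a))"
    using assms unfolding simplicial_map_prod_def by blast
  moreover have "length a = Suc (length w)"
    using s by (simp add: pg_prod_simplex_def delta_simplices_def)
  ultimately show ?thesis
    using assms simplicial_map_prod_length[OF F s]
    by (simp add: pg_face_def delta_face_def butlast_conv_take)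
qed

lemma simplicial_map_prod_inner_face:
  assumes F: "simplicial_map_prod D Pi m D' Pi' F" and s: "pg_prod_simplex D m ([x, y], [b, c, d])"
  shows "F ([Pi [x, y]], [b, d]) = [Pi' [F ([x, y], [b, c, d]) ! 0, F ([x, y], [b, c, d]) ! 1]]"
proof -
  have face: "F (pg_face Pi 1 [x, y], delta_face 1 [b, c, d]) = pg_face Pi' 1 (F ([x, y], [b, c, d]))"
    using assms unfolding simplicial_map_prod_def by auto
  obtain p q where "F ([x, y], [b, c, d]) = [p, q]"
    using simplicial_map_prod_length[OF F s]
    by (auto simp: numeral_2_eq_2 length_Suc_conv)
  then show ?thesis using face by (simp add: pg_face_def delta_face_def)
qed

lemma simplicial_maps_eq_by_outer_faces:
  assumes F: "simplicial_map_prod D Pi m D' Pi' F" and G: "simplicial_map_prod D Pi m D' Pi' G"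
    and s: "pg_prod_simplex D m (w, a)" and len: "2 \<le> length w"
    and "F (tl w, tl a) = G (tl w, tl a)" and "F (butlast w, butlast a) = G (butlast w, butlast a)"
  shows "F (w, a) = G (w, a)"
proof (rule list_eq_by_tl_butlast)
  have "w \<noteq> []" using len by auto
  then show "tl (F (w, a)) = tl (G (w, a))" "butlast (F (w, a)) = butlast (G (w, a))"
    using assms simplicial_map_prod_tl[OF _ s] simplicial_map_prod_butlast[OF _ s] by metis+
  show "length (F (w, a)) = length (G (w, a))" "2 \<le> length (F (w, a))"
    using len simplicial_map_prod_length[OF F s] simplicial_map_prod_length[OF G s] by simp_all
qed

lemma simplicial_maps_eq_on_composite_edge:
  assumes F: "simplicial_map_prod D Pi m D' Pi' F" and G: "simplicial_map_prod D Pi m D' Pi' G"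
    and s: "pg_prod_simplex D m ([x, y], [b, c, d])"
    and "F ([x], [b, c]) = G ([x], [b, c])" and "F ([y], [c, d]) = G ([y], [c, d])"
  shows "F ([Pi [x, y]], [b, d]) = G ([Pi [x, y]], [b, d])"
proof -
  have "F ([x, y], [b, c, d]) = G ([x, y], [b, c, d])"
    using simplicial_maps_eq_by_outer_faces[OF F G s] assms(4,5) by simp
  then show ?thesis
    using simplicial_map_prod_inner_face[OF F s] simplicial_map_prod_inner_face[OF G s] by simp
qed

lemma simplicial_maps_eq_on_identity_edges:
  assumes pg: "partial_group M D Pi iv"
    and F: "simplicial_map_prod D Pi m D' Pi' F" and G: "simplicial_map_prod D Pi m D' Pi' G"
    and degenerate: "\<And>i. i \<le> m \<Longrightarrow> F ([Pi []], [i, i]) = G ([Pi []], [i, i])"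
    and generators: "\<And>k. k \<in> {1..m} \<Longrightarrow> F ([Pi []], [k - 1, k]) = G ([Pi []], [k - 1, k])"
    and "b \<le> c" "c \<le> m"
  shows "F ([Pi []], [b, c]) = G ([Pi []], [b, c])"
  using assms(6,7)
proof (induction c)
  case 0
  then show ?case using degenerate by simp
next
  case (Suc c)
  show ?case
  proof (cases "b = Suc c")
    case True
    then show ?thesis using degenerate Suc.prems by simp
  next
    case False
    let ?e = "Pi []"
    have e: "[?e] \<in> D" using partial_group_unit_D[OF pg] .
    have s: "pg_prod_simplex D m ([?e, ?e], [b, c, Suc c])"
      using partial_group_right_unit(1)[OF pg e] Suc.prems False
      by (auto simp: pg_prod_simplex_def delta_simplices_def)
    have "F ([?e], [c, Suc c]) = G ([?e], [c, Suc c])"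
      using generators[of "Suc c"] Suc.prems by simp
    then show ?thesis
      using simplicial_maps_eq_on_composite_edge[OF F G s] Suc False
        partial_group_right_unit(2)[OF pg e] by simp
  qed
qed

lemma simplicial_maps_eq_on_edges:
  assumes pg: "partial_group M D Pi iv"
    and F: "simplicial_map_prod D Pi m D' Pi' F" and G: "simplicial_map_prod D Pi m D' Pi' G"
    and degenerate: "\<And>i x. i \<le> m \<Longrightarrow> [x] \<in> D \<Longrightarrow> F ([x], [i, i]) = G ([x], [i, i])"
    and identity_edges: "\<And>b c. b \<le> c \<Longrightarrow> c \<le> m \<Longrightarrow> F ([Pi []], [b, c]) = G ([Pi []], [b, c])"
    and s: "pg_prod_simplex D m ([x], [b, c])"
  shows "F ([x], [b, c]) = G ([x], [b, c])"
proof -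
  have x: "[x] \<in> D" and bc: "b \<le> c" "c \<le> m"
    using s by (auto simp: pg_prod_simplex_def delta_simplices_def)
  have "pg_prod_simplex D m ([x, Pi []], [b, b, c])"
    using partial_group_right_unit(1)[OF pg x] bc
    by (auto simp: pg_prod_simplex_def delta_simplices_def)
  from simplicial_maps_eq_on_composite_edge[OF F G this]
  show ?thesis
    using degenerate identity_edges x bc partial_group_right_unit(2)[OF pg x] by simp
qed

lemma simplicial_maps_eq_by_edges:
  assumes pg: "partial_group M D Pi iv"
    and F: "simplicial_map_prod D Pi m D' Pi' F" and G: "simplicial_map_prod D Pi m D' Pi' G"
    and vertices: "\<And>i. i \<le> m \<Longrightarrow> F ([], [i]) = G ([], [i])"
    and edges: "\<And>x b c. pg_prod_simplex D m ([x], [b, c]) \<Longrightarrow> F ([x], [b, c]) = G ([x], [b, c])"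
    and s: "pg_prod_simplex D m (w, a)"
  shows "F (w, a) = G (w, a)"
  using s
proof (induction "length w" arbitrary: w a rule: less_induct)
  case less
  have a: "length a = Suc (length w)" "set a \<subseteq> {..m}"
    using less.prems by (auto simp: pg_prod_simplex_def delta_simplices_def)
  consider "w = []" | x where "w = [x]" | "2 \<le> length w"
    by (metis One_nat_def length_0_conv length_Suc_conv less_2_cases not_le)
  then show ?case
  proof cases
    case 1
    then show ?thesis using a vertices by (auto simp: length_Suc_conv)
  next
    case 2
    then show ?thesis using a edges less.prems by (auto simp: numeral_2_eq_2 length_Suc_conv)
  next
    case 3
    then show ?thesis
      using simplicial_maps_eq_by_outer_faces[OF F G less.prems] less.hyps
        pg_prod_simplex_tl[OF pg less.prems] pg_prod_simplex_butlast[OF pg less.prems] by force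
  qed
qed

theorem proposition5p2:
  fixes M :: "'a set" and D :: "'a list set" and Pi :: "'a list \<Rightarrow> 'a" and iv :: "'a \<Rightarrow> 'a"
    and M' :: "'b set" and D' :: "'b list set" and Pi' :: "'b list \<Rightarrow> 'b" and iv' :: "'b \<Rightarrow> 'b"
    and m :: nat and F G :: "'a list \<times> nat list \<Rightarrow> 'b list"
  assumes "partial_group M D Pi iv"
    and "partial_group M' D' Pi' iv'"
    and "simplicial_map_prod D Pi m D' Pi' F"
    and "simplicial_map_prod D Pi m D' Pi' G"
    and "\<forall>i\<le>m. \<forall>w\<in>D. F (w, replicate (Suc (length w)) i) = G (w, replicate (Suc (length w)) i)"
    and "\<forall>k\<in>{1..m}. F ([Pi []], [k - 1, k]) = G ([Pi []], [k - 1, k])"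
  shows "\<forall>x. pg_prod_simplex D m x \<longrightarrow> F x = G x"
proof -
  note pg = assms(1) and F = assms(3) and G = assms(4)
  have on_degenerate: "F (w, replicate (Suc (length w)) i) = G (w, replicate (Suc (length w)) i)"
    if "i \<le> m" "w \<in> D" for i w
    using assms(5) that by blast
  have vertices: "F ([], [i]) = G ([], [i])" if "i \<le> m" for i
    using on_degenerate[OF that partial_groupD(2)[OF pg]] by simp
  have degenerate_edges: "F ([x], [i, i]) = G ([x], [i, i])" if "i \<le> m" "[x] \<in> D" for i x
    using on_degenerate[OF that] by simp
  have identity_edges: "F ([Pi []], [b, c]) = G ([Pi []], [b, c])" if "b \<le> c" "c \<le> m" for b c
    using simplicial_maps_eq_on_identity_edges[OF pg F G _ _ that] degenerate_edges
      partial_group_unit_D[OF pg] assms(6) by blast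
  have edges: "F ([x], [b, c]) = G ([x], [b, c])" if "pg_prod_simplex D m ([x], [b, c])" for x b c
    using simplicial_maps_eq_on_edges[OF pg F G degenerate_edges identity_edges that] .
  show ?thesis
    using simplicial_maps_eq_by_edges[OF pg F G vertices edges] by auto
qed

end
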